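(* Let $\{T^k\}_k$ and $(\mathbf{P}_t)_t$ satisfy the standing assumptions (i) and (ii), and let $\pi$ be a probability distribution on $\mathcal{S}$. Then there exists a sequence of root estimators that is consistent for $\{T^k\}_k$, $(\mathbf{P}_t)_t$ and $\pi$ if and only if for all $i\ne j\in\mathcal{S}$ with $\pi(i)\wedge\pi(j)>0$, $$\liminf_{k\to\infty}\|\mathcal{L}^i_{T^k}-\mathcal{L}^j_{T^k}\|_{\mathrm{TV}}=1.$$
   Context: Trees: finite rooted trees $T=(V,E,\rho,\ell)$ with positive edge lengths, viewed as metric objects; leaves $\partial T$. Markov process on countable $\mathcal{S}$ with transition matrices $\mathbf{P}_t=(p_{ij}(t))$ and stable conservative $Q$-matrix. A $\mathbf{P}_t$-chain on $T$: root state $X_\rho$, then along each edge $(u,v)$ run the chain from $X_u$ for time $\ell_{(u,v)}$, independently on outgoing edges given the branching state. $\mathbb{P}^i$, $\mathbb{P}^\pi$: laws with root state $i$, resp. drawn from $\pi$. $\mathcal{L}^i_T$ denotes the law of the leaf states $(X_u)_{u\in\partial T}$ under $\mathbb{P}^i$. Standing assumptions: $\{T^k\}$ nested with common root ($T^{k-1}$ is the restriction of $T^k$ to a subset of its leaves), $|\partial T^k|=k$; (i) uniformly bounded height; (ii) for every $t$ the rows of $\mathbf{P}_t$ are distinct. $X^k$ is a $\mathbf{P}_t$-chain on $T^k$ with root distribution $\pi$; root estimators $F_k:\mathcal{S}^{\partial T^k}\to\mathcal{S}$ are consistent if $\liminf_k\mathbb{P}^\pi[F_k(X^k_{\partial T^k})=X^k_\rho]=1$.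 TV distance $\|\mu_1-\mu_2\|_{\mathrm{TV}}=\frac12\sum_\sigma|\mu_1(\sigma)-\mu_2(\sigma)|$. *)

theory Defs
  imports "HOL-Probability.Probability"
begin

text \<open>A rooted tree on vertex type 'v: finite vertex set, a root, a parent map
  (meaningful on non-root vertices) and the length of the edge (par v, v)
  attached to each non-root vertex v.\<close>

record 'v mtree =
  verts :: "'v set"
  root  :: 'v
  par   :: "'v \<Rightarrow> 'v"
  len   :: "'v \<Rightarrow> real"

definition is_mtree :: "'v mtree \<Rightarrow> bool" where
  "is_mtree T \<longleftrightarrow> finite (verts T) \<and> root T \<in> verts T
     \<and> (\<forall>v \<in> verts T - {root T}. par T v \<in> verts T \<and> len T v > 0)
     \<and> (\<forall>v \<in> verts T. \<exists>n. (par T ^^ n) v = root T)"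

definition depth :: "'v mtree \<Rightarrow> 'v \<Rightarrow> nat" where
  "depth T v = (LEAST n. (par T ^^ n) v = root T)"

definition children :: "'v mtree \<Rightarrow> 'v \<Rightarrow> 'v set" where
  "children T v = {c \<in> verts T - {root T}. par T c = v}"

definition leaves :: "'v mtree \<Rightarrow> 'v set" where
  "leaves T = {v \<in> verts T - {root T}. children T v = {}}"

definition root_dist :: "'v mtree \<Rightarrow> 'v \<Rightarrow> real" where
  "root_dist T v = (\<Sum>m < depth T v. len T ((par T ^^ m) v))"

definition height :: "'v mtree \<Rightarrow> real" where
  "height T = Max (root_dist T ` verts T)"

definition ancestor :: "'v mtree \<Rightarrow> 'v \<Rightarrow> 'v \<Rightarrow> bool" where
  "ancestor T u v \<longleftrightarrow> (\<exists>n \<le> depth T v. (par T ^^ n) v = u)"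

definition restriction_of :: "'v mtree \<Rightarrow> 'v mtree \<Rightarrow> 'v set \<Rightarrow> bool" where
  "restriction_of T' T L \<longleftrightarrow> L \<subseteq> leaves T
     \<and> verts T' = {u \<in> verts T. \<exists>l \<in> L. ancestor T u l}
     \<and> root T' = root T
     \<and> (\<forall>v \<in> verts T' - {root T'}. par T' v = par T v \<and> len T' v = len T v)"

text \<open>P t i is the row (p_ij(t))_j of the transition matrix, as a pmf.
  Transition function with a stable conservative Q-matrix q.\<close>
definition transition_fun :: "(real \<Rightarrow> 'a::countable \<Rightarrow> 'a pmf) \<Rightarrow> bool" where
  "transition_fun P \<longleftrightarrow>
     (\<forall>i. P 0 i = return_pmf i)
   \<and> (\<forall>s t i. s \<ge> 0 \<longrightarrow> t \<ge> 0 \<longrightarrow> P (s + t) i = bind_pmf (P s i) (\<lambda>j. P t j))"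

definition stable_conservative_Q :: "(real \<Rightarrow> 'a::countable \<Rightarrow> 'a pmf) \<Rightarrow> ('a \<Rightarrow> 'a \<Rightarrow> real) \<Rightarrow> bool" where
  "stable_conservative_Q P q \<longleftrightarrow>
     (\<forall>i j. ((\<lambda>t. pmf (P t i) j) has_real_derivative q i j) (at 0 within {0..}))
   \<and> (\<forall>i. (q i has_sum 0) UNIV)"

text \<open>Level-by-level construction: all vertices at depth n+1 are sampled
  independently, each from P (len v) applied to the state of its parent.\<close>
primrec chain_upto :: "'v mtree \<Rightarrow> (real \<Rightarrow> 'a \<Rightarrow> 'a pmf) \<Rightarrow> 'a \<Rightarrow> nat \<Rightarrow> ('v \<Rightarrow> 'a) pmf" where
  "chain_upto T P i 0 = return_pmf (\<lambda>v. i)"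
| "chain_upto T P i (Suc n) =
     bind_pmf (chain_upto T P i n) (\<lambda>x.
       map_pmf (\<lambda>y v. if v \<in> verts T - {root T} \<and> depth T v = Suc n then y v else x v)
         (Pi_pmf {v \<in> verts T - {root T}. depth T v = Suc n} undefined
            (\<lambda>v. P (len T v) (x (par T v)))))"

definition chain_law :: "'v mtree \<Rightarrow> (real \<Rightarrow> 'a \<Rightarrow> 'a pmf) \<Rightarrow> 'a \<Rightarrow> ('v \<Rightarrow> 'a) pmf" where
  "chain_law T P i = chain_upto T P i (Max (depth T ` verts T))"

text \<open>L^i_T: law of the leaf states (functions on leaves, undefined elsewhere).\<close>
definition leaf_law :: "'v mtree \<Rightarrow> (real \<Rightarrow> 'a \<Rightarrow> 'a pmf) \<Rightarrow> 'a \<Rightarrow> ('v \<Rightarrow> 'a) pmf" where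
  "leaf_law T P i = map_pmf (\<lambda>x. restrict x (leaves T)) (chain_law T P i)"

definition root_leaf_law :: "'v mtree \<Rightarrow> (real \<Rightarrow> 'a \<Rightarrow> 'a pmf) \<Rightarrow> 'a pmf \<Rightarrow> ('a \<times> ('v \<Rightarrow> 'a)) pmf" where
  "root_leaf_law T P \<pi> = bind_pmf \<pi> (\<lambda>i. map_pmf (\<lambda>\<sigma>. (i, \<sigma>)) (leaf_law T P i))"

definition tv_dist :: "'b pmf \<Rightarrow> 'b pmf \<Rightarrow> real" where
  "tv_dist \<mu> \<nu> = (\<Sum>\<^sub>\<infinity>\<sigma>. \<bar>pmf \<mu> \<sigma> - pmf \<nu> \<sigma>\<bar>) / 2"

definition consistent_estimators ::
  "(nat \<Rightarrow> 'v mtree) \<Rightarrow> (real \<Rightarrow> 'a \<Rightarrow> 'a pmf) \<Rightarrow> 'a pmf \<Rightarrow> (nat \<Rightarrow> ('v \<Rightarrow> 'a) \<Rightarrow> 'a) \<Rightarrow> bool" where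
  "consistent_estimators T P \<pi> F \<longleftrightarrow>
     liminf (\<lambda>k. ereal (measure_pmf.prob (root_leaf_law (T k) P \<pi>) {(i, \<sigma>). F k \<sigma> = i})) = 1"

end

theory Submission
  imports Defs
begin

text \<open>Write \<open>1 - TV(\<mu>, \<nu>) = \<Sum>\<^sub>\<sigma> min (\<mu> \<sigma>) (\<nu> \<sigma>)\<close> for the overlap. Any
  estimator errs with probability at least \<open>min (\<pi> i) (\<pi> j)\<close> times the overlap of the laws
  of i and j, so consistency forces these overlaps to vanish. Conversely, for a finite set S
  of states carrying most of the prior mass, the maximum a posteriori estimator among the
  states of S errs with probability at most \<open>1 - \<pi>(S)\<close> plus the pairwise overlaps within S;
  as S can be chosen independently of k, vanishing overlaps give consistency.\<close>

no_notation Infinite_Sum.abs_summable_on (infixr \<open>abs'_summable'_on\<close> 46)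

definition overlap :: "'b pmf \<Rightarrow> 'b pmf \<Rightarrow> real" where
  "overlap \<mu> \<nu> = infsetsum (\<lambda>\<sigma>. min (pmf \<mu> \<sigma>) (pmf \<nu> \<sigma>)) UNIV"

lemma abs_summable_on_pmf_diff: "(\<lambda>\<sigma>. \<bar>pmf \<mu> \<sigma> - pmf \<nu> \<sigma>\<bar>) abs_summable_on A"
proof (rule abs_summable_on_comparison_test')
  show "(\<lambda>\<sigma>. pmf \<mu> \<sigma> + pmf \<nu> \<sigma>) abs_summable_on A" by auto
  show "norm \<bar>pmf \<mu> \<sigma> - pmf \<nu> \<sigma>\<bar> \<le> pmf \<mu> \<sigma> + pmf \<nu> \<sigma>" for \<sigma>
    using pmf_nonneg[of \<mu> \<sigma>] pmf_nonneg[of \<nu> \<sigma>] by (simp add: abs_le_iff)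
qed

lemma abs_summable_on_pmf_min: "(\<lambda>\<sigma>. min (pmf \<mu> \<sigma>) (pmf \<nu> \<sigma>)) abs_summable_on A"
  by (rule abs_summable_on_comparison_test'[OF pmf_abs_summable[of \<mu> A]]) auto

lemma overlap_nonneg: "overlap \<mu> \<nu> \<ge> 0"
  unfolding overlap_def by (rule infsetsum_nonneg) auto

lemma tv_dist_eq_1_minus_overlap: "tv_dist \<mu> \<nu> = 1 - overlap \<mu> \<nu>"
proof -
  have "overlap \<mu> \<nu> = infsetsum (\<lambda>\<sigma>. ((pmf \<mu> \<sigma> + pmf \<nu> \<sigma>) - \<bar>pmf \<mu> \<sigma> - pmf \<nu> \<sigma>\<bar>) / 2) UNIV"
    unfolding overlap_def by (rule infsetsum_cong) auto
  also have "\<dots> = (2 - infsetsum (\<lambda>\<sigma>. \<bar>pmf \<mu> \<sigma> - pmf \<nu> \<sigma>\<bar>) UNIV) / 2"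
    by (simp add: infsetsum_cdiv infsetsum_diff infsetsum_add abs_summable_on_diff
        abs_summable_on_add abs_summable_on_pmf_diff pmf_abs_summable infsetsum_pmf_eq_1)
  also have "infsetsum (\<lambda>\<sigma>. \<bar>pmf \<mu> \<sigma> - pmf \<nu> \<sigma>\<bar>) UNIV = 2 * tv_dist \<mu> \<nu>"
    unfolding tv_dist_def by (simp add: infsetsum_infsum[OF abs_summable_on_pmf_diff])
  finally show ?thesis by simp
qed

lemma tv_dist_le_1: "tv_dist \<mu> \<nu> \<le> 1"
  by (simp add: tv_dist_eq_1_minus_overlap overlap_nonneg)

lemma overlap_le_prob_Compl_add_prob:
  "overlap \<mu> \<nu> \<le> measure_pmf.prob \<mu> (- A) + measure_pmf.prob \<nu> A"
proof -
  let ?m = "\<lambda>\<sigma>. min (pmf \<mu> \<sigma>) (pmf \<nu> \<sigma>)"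
  have "overlap \<mu> \<nu> = infsetsum ?m (- A) + infsetsum ?m A"
    unfolding overlap_def
    by (subst infsetsum_Un_disjoint[symmetric]) (auto simp: abs_summable_on_pmf_min)
  also have "\<dots> \<le> infsetsum (pmf \<mu>) (- A) + infsetsum (pmf \<nu>) A"
    by (intro add_mono infsetsum_mono) (auto simp: abs_summable_on_pmf_min)
  finally show ?thesis by (simp add: measure_pmf_conv_infsetsum)
qed

lemma scaled_prob_le_overlap:
  assumes "0 \<le> a" "a \<le> 1" "0 \<le> b" "b \<le> 1"
    and dominated: "\<And>\<sigma>. \<sigma> \<in> B \<Longrightarrow> a * pmf \<mu> \<sigma> \<le> b * pmf \<nu> \<sigma>"
  shows "a * measure_pmf.prob \<mu> B \<le> overlap \<mu> \<nu>"
proof -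
  have "a * measure_pmf.prob \<mu> B = infsetsum (\<lambda>\<sigma>. a * pmf \<mu> \<sigma>) B"
    by (simp add: measure_pmf_conv_infsetsum infsetsum_cmult_right pmf_abs_summable)
  also have "\<dots> \<le> infsetsum (\<lambda>\<sigma>. min (pmf \<mu> \<sigma>) (pmf \<nu> \<sigma>)) B"
  proof (rule infsetsum_mono)
    fix \<sigma> assume "\<sigma> \<in> B"
    have "a * pmf \<mu> \<sigma> \<le> pmf \<mu> \<sigma>"
      using assms(1,2) by (simp add: mult_left_le_one_le)
    moreover have "a * pmf \<mu> \<sigma> \<le> pmf \<nu> \<sigma>"
      using dominated[OF \<open>\<sigma> \<in> B\<close>] assms(3,4) by (meson order_trans mult_left_le_one_le pmf_nonneg)
    ultimately show "a * pmf \<mu> \<sigma> \<le> min (pmf \<mu> \<sigma>) (pmf \<nu> \<sigma>)" by simp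
  qed (auto simp: abs_summable_on_pmf_min)
  also have "\<dots> \<le> overlap \<mu> \<nu>"
    unfolding overlap_def
    by (rule infsetsum_mono_neutral_left) (auto simp: abs_summable_on_pmf_min)
  finally show ?thesis .
qed

definition success_prob :: "'a pmf \<Rightarrow> ('a \<Rightarrow> 'b pmf) \<Rightarrow> ('b \<Rightarrow> 'a) \<Rightarrow> real" where
  "success_prob \<pi> \<mu> f = (\<integral>x. measure_pmf.prob (\<mu> x) {\<sigma>. f \<sigma> = x} \<partial>\<pi>)"

lemma integrable_measure_pmf_bounded:
  fixes g :: "'a \<Rightarrow> real"
  assumes "\<And>x. \<bar>g x\<bar> \<le> B"
  shows "integrable (measure_pmf M) g"
  by (rule measure_pmf.integrable_const_bound[where B=B]) (auto simp: assms)

lemma prob_bind_pmf: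
  "measure_pmf.prob (bind_pmf M N) X = (\<integral>x. measure_pmf.prob (N x) X \<partial>M)"
proof -
  have "emeasure (measure_pmf (bind_pmf M N)) X = (\<integral>\<^sup>+x. emeasure (N x) X \<partial>M)"
    by (rule emeasure_bind_pmf)
  also have "\<dots> = (\<integral>\<^sup>+x. ennreal (measure_pmf.prob (N x) X) \<partial>M)"
    by (simp add: measure_pmf.emeasure_eq_measure)
  also have "\<dots> = ennreal (\<integral>x. measure_pmf.prob (N x) X \<partial>M)"
    by (rule nn_integral_eq_integral) (auto intro!: integrable_measure_pmf_bounded[where B=1])
  finally show ?thesis
    by (simp add: measure_pmf.emeasure_eq_measure integral_nonneg_AE)
qed

lemma prob_root_recovered_eq_success_prob:
  "measure_pmf.prob (root_leaf_law T P \<pi>) {(i, \<sigma>). f \<sigma> = i} = success_prob \<pi> (leaf_law T P) f"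
  unfolding root_leaf_law_def prob_bind_pmf success_prob_def
  by (rule Bochner_Integration.integral_cong[OF refl]) (simp add: vimage_def)

lemma success_prob_le_1: "success_prob \<pi> \<mu> f \<le> 1"
  unfolding success_prob_def
  by (rule measure_pmf.integral_le_const) (auto intro!: integrable_measure_pmf_bounded[where B=1])

lemma sum_pmf_le_integral:
  fixes g :: "'a \<Rightarrow> real"
  assumes "finite S" "\<And>x. 0 \<le> g x" "\<And>x. g x \<le> B"
  shows "(\<Sum>x\<in>S. g x * pmf \<pi> x) \<le> (\<integral>x. g x \<partial>\<pi>)"
proof -
  have "(\<Sum>x\<in>S. g x * pmf \<pi> x) = (\<Sum>x\<in>S. indicator S x * g x * pmf \<pi> x)"
    by (rule sum.cong) auto
  also have "\<dots> = (\<integral>x. indicator S x * g x \<partial>\<pi>)"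
    by (rule integral_measure_pmf_real[symmetric]) (auto simp: assms(1) indicator_def split: if_splits)
  also have "\<dots> \<le> (\<integral>x. g x \<partial>\<pi>)"
    using assms(2,3) order_trans[OF assms(2,3)]
    by (intro integral_mono integrable_measure_pmf_bounded[where B=B])
       (auto simp: indicator_def abs_le_iff)
  finally show ?thesis .
qed

lemma error_prob_ge_weighted_overlap:
  assumes "i \<noteq> j"
  shows "min (pmf \<pi> i) (pmf \<pi> j) * overlap (\<mu> i) (\<mu> j) \<le> 1 - success_prob \<pi> \<mu> f"
proof -
  define e where "e x = measure_pmf.prob (\<mu> x) (- {\<sigma>. f \<sigma> = x})" for x
  have e01: "0 \<le> e x" "e x \<le> 1" for x
    unfolding e_def by auto
  have "1 - success_prob \<pi> \<mu> f = (\<integral>x. 1 - measure_pmf.prob (\<mu> x) {\<sigma>. f \<sigma> = x} \<partial>\<pi>)"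
    unfolding success_prob_def
    by (subst Bochner_Integration.integral_diff) (auto intro!: integrable_measure_pmf_bounded[where B=1])
  also have "\<dots> = (\<integral>x. e x \<partial>\<pi>)"
    unfolding e_def by (simp add: measure_pmf.prob_compl[symmetric] Compl_eq_Diff_UNIV)
  finally have "1 - success_prob \<pi> \<mu> f = (\<integral>x. e x \<partial>\<pi>)" .
  moreover have "(\<Sum>x\<in>{i, j}. e x * pmf \<pi> x) \<le> (\<integral>x. e x \<partial>\<pi>)"
    by (rule sum_pmf_le_integral[where B=1]) (auto simp: e01)
  moreover have "min (pmf \<pi> i) (pmf \<pi> j) * overlap (\<mu> i) (\<mu> j)
      \<le> min (pmf \<pi> i) (pmf \<pi> j) * (e i + e j)"
  proof (rule mult_left_mono)
    have "measure_pmf.prob (\<mu> j) {\<sigma>. f \<sigma> = i} \<le> e j"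
      unfolding e_def using assms by (intro measure_pmf.finite_measure_mono) auto
    then show "overlap (\<mu> i) (\<mu> j) \<le> e i + e j"
      using overlap_le_prob_Compl_add_prob[of "\<mu> i" "\<mu> j" "{\<sigma>. f \<sigma> = i}"]
      unfolding e_def by linarith
  qed simp
  moreover have "min (pmf \<pi> i) (pmf \<pi> j) * (e i + e j)
      = e i * min (pmf \<pi> i) (pmf \<pi> j) + e j * min (pmf \<pi> i) (pmf \<pi> j)"
    by (simp add: algebra_simps)
  moreover have "\<dots> \<le> e i * pmf \<pi> i + e j * pmf \<pi> j"
    by (intro add_mono mult_left_mono) (auto simp: e01)
  ultimately show ?thesis
    using assms by simp
qed

definition overlap_sum :: "('a \<Rightarrow> 'b pmf) \<Rightarrow> 'a set \<Rightarrow> real" where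
  "overlap_sum \<mu> S = (\<Sum>i\<in>S. \<Sum>j\<in>S - {i}. overlap (\<mu> i) (\<mu> j))"

lemma overlap_sum_nonneg: "overlap_sum \<mu> S \<ge> 0"
  unfolding overlap_sum_def by (intro sum_nonneg overlap_nonneg)

lemma success_prob_ge_if_MAP:
  assumes S: "finite S" and f_in: "\<And>\<sigma>. f \<sigma> \<in> S"
    and f_MAP: "\<And>\<sigma> j. j \<in> S \<Longrightarrow> pmf \<pi> j * pmf (\<mu> j) \<sigma> \<le> pmf \<pi> (f \<sigma>) * pmf (\<mu> (f \<sigma>)) \<sigma>"
  shows "measure_pmf.prob \<pi> S - overlap_sum \<mu> S \<le> success_prob \<pi> \<mu> f"
proof -
  define g where "g x = measure_pmf.prob (\<mu> x) {\<sigma>. f \<sigma> = x}" for x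
  have misclassified:
    "pmf \<pi> i * (1 - g i) \<le> (\<Sum>j\<in>S - {i}. overlap (\<mu> i) (\<mu> j))" if "i \<in> S" for i
  proof -
    have "1 - g i = measure_pmf.prob (\<mu> i) (- {\<sigma>. f \<sigma> = i})"
      unfolding g_def by (simp add: measure_pmf.prob_compl[symmetric] Compl_eq_Diff_UNIV)
    also have "\<dots> = measure_pmf.prob (\<mu> i) (\<Union>j\<in>S - {i}. {\<sigma>. f \<sigma> = j})"
      using f_in by (intro arg_cong[where f="measure_pmf.prob (\<mu> i)"]) auto
    also have "\<dots> \<le> (\<Sum>j\<in>S - {i}. measure_pmf.prob (\<mu> i) {\<sigma>. f \<sigma> = j})"
      using S by (intro measure_subadditive_finite) (auto simp: measure_pmf.emeasure_eq_measure)
    finally have "pmf \<pi> i * (1 - g i)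
        \<le> (\<Sum>j\<in>S - {i}. pmf \<pi> i * measure_pmf.prob (\<mu> i) {\<sigma>. f \<sigma> = j})"
      by (simp add: sum_distrib_left[symmetric] mult_left_mono)
    also have "\<dots> \<le> (\<Sum>j\<in>S - {i}. overlap (\<mu> i) (\<mu> j))"
      using f_MAP[OF that] by (intro sum_mono scaled_prob_le_overlap[where b="pmf \<pi> _"]) (auto simp: pmf_le_1)
    finally show ?thesis .
  qed
  have "measure_pmf.prob \<pi> S - overlap_sum \<mu> S
      = (\<Sum>i\<in>S. pmf \<pi> i - (\<Sum>j\<in>S - {i}. overlap (\<mu> i) (\<mu> j)))"
    by (simp add: overlap_sum_def measure_measure_pmf_finite S sum_subtractf)
  also have "\<dots> \<le> (\<Sum>i\<in>S. g i * pmf \<pi> i)"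
    using misclassified by (intro sum_mono) (simp add: algebra_simps)
  also have "\<dots> \<le> success_prob \<pi> \<mu> f"
    unfolding success_prob_def g_def by (rule sum_pmf_le_integral[OF S]) auto
  finally show ?thesis .
qed

lemma ex_estimator_success_prob_ge:
  assumes "finite S"
  shows "\<exists>f. measure_pmf.prob \<pi> S - overlap_sum \<mu> S \<le> success_prob \<pi> \<mu> f"
proof (cases "S = {}")
  case True
  then show ?thesis
    by (simp add: overlap_sum_def success_prob_def integral_nonneg_AE)
next
  case False
  let ?w = "\<lambda>i \<sigma>. pmf \<pi> i * pmf (\<mu> i) \<sigma>"
  have "\<exists>i\<in>S. \<forall>j\<in>S. ?w j \<sigma> \<le> ?w i \<sigma>" for \<sigma>
  proof -
    have "Max ((\<lambda>i. ?w i \<sigma>) ` S) \<in> (\<lambda>i. ?w i \<sigma>) ` S"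
      using assms False by (intro Max_in) auto
    then obtain i where i: "i \<in> S" "?w i \<sigma> = Max ((\<lambda>i. ?w i \<sigma>) ` S)"
      by auto
    then have "\<forall>j\<in>S. ?w j \<sigma> \<le> ?w i \<sigma>"
      using assms by simp
    then show ?thesis
      using i by blast
  qed
  then obtain f where "\<And>\<sigma>. f \<sigma> \<in> S" "\<And>\<sigma> j. j \<in> S \<Longrightarrow> ?w j \<sigma> \<le> ?w (f \<sigma>) \<sigma>"
    by metis
  then show ?thesis
    using success_prob_ge_if_MAP[OF assms] by blast
qed

text \<open>The estimator does not depend on S: it is the MAP estimator of a set that nearly
  minimises the error bound.\<close>

lemma ex_estimator_uniformly_near_MAP:
  assumes "\<epsilon> > 0"
  shows "\<exists>f. \<forall>S. finite S \<longrightarrow>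
           1 - success_prob \<pi> \<mu> f \<le> 1 - measure_pmf.prob \<pi> S + overlap_sum \<mu> S + \<epsilon>"
proof -
  define b where "b S = 1 - measure_pmf.prob \<pi> S + overlap_sum \<mu> S" for S
  let ?B = "b ` {S. finite S}"
  have "bdd_below ?B"
    by (rule bdd_belowI[of _ 0]) (auto simp: b_def overlap_sum_nonneg add_nonneg_nonneg)
  obtain S0 where "finite S0" "b S0 < Inf ?B + \<epsilon>"
    using cInf_lessD[of ?B "Inf ?B + \<epsilon>"] assms by auto
  moreover obtain f where "measure_pmf.prob \<pi> S0 - overlap_sum \<mu> S0 \<le> success_prob \<pi> \<mu> f"
    using ex_estimator_success_prob_ge[OF \<open>finite S0\<close>] by blast
  moreover have "Inf ?B \<le> b S" if "finite S" for S
    using \<open>bdd_below ?B\<close> that by (intro cInf_lower) auto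
  ultimately show ?thesis
    unfolding b_def by (intro exI[of _ f]) fastforce
qed

lemma ex_finite_subset_set_pmf_prob_gt:
  assumes "e > 0"
  shows "\<exists>S. finite S \<and> S \<subseteq> set_pmf \<pi> \<and> measure_pmf.prob \<pi> S > 1 - e"
proof -
  have "Infinite_Sum.abs_summable_on (pmf \<pi>) UNIV"
    using abs_summable_equivalent pmf_abs_summable by blast
  then have "pmf \<pi> summable_on UNIV"
    by simp
  moreover have "infsum (pmf \<pi>) UNIV = 1"
    using infsetsum_infsum[OF pmf_abs_summable[of \<pi> UNIV]] infsetsum_pmf_eq_1[of \<pi> UNIV] by simp
  ultimately have "(pmf \<pi> has_sum 1) UNIV"
    using has_sum_infsum by fastforce
  then have "eventually (\<lambda>X. 1 - e < sum (pmf \<pi>) X) (finite_subsets_at_top UNIV)"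
    unfolding has_sum_def using assms by (intro order_tendstoD(1)) auto
  then obtain X where X: "finite X" "1 - e < sum (pmf \<pi>) X"
    unfolding eventually_finite_subsets_at_top by blast
  have "sum (pmf \<pi>) X = sum (pmf \<pi>) (X \<inter> set_pmf \<pi>)"
    using X(1) by (intro sum.mono_neutral_right) (auto simp: set_pmf_eq)
  then show ?thesis
    using X by (intro exI[of _ "X \<inter> set_pmf \<pi>"]) (auto simp: measure_measure_pmf_finite)
qed

lemma tv_dist_tendsto_1_if_success_prob_tendsto_1:
  assumes success: "(\<lambda>k. success_prob \<pi> (\<mu> k) (F k)) \<longlonglongrightarrow> 1"
    and "i \<noteq> j" and weights: "min (pmf \<pi> i) (pmf \<pi> j) > 0"
  shows "(\<lambda>k. tv_dist (\<mu> k i) (\<mu> k j)) \<longlonglongrightarrow> 1"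
proof -
  let ?m = "min (pmf \<pi> i) (pmf \<pi> j)"
  have bound: "overlap (\<mu> k i) (\<mu> k j) \<le> (1 - success_prob \<pi> (\<mu> k) (F k)) / ?m" for k
    using error_prob_ge_weighted_overlap[OF \<open>i \<noteq> j\<close>, of \<pi> "\<mu> k" "F k"] weights
    by (simp add: field_simps)
  have "(\<lambda>k. (1 - success_prob \<pi> (\<mu> k) (F k)) / ?m) \<longlonglongrightarrow> (1 - 1) / ?m"
    by (intro tendsto_intros success) (use weights in auto)
  then have upper: "(\<lambda>k. (1 - success_prob \<pi> (\<mu> k) (F k)) / ?m) \<longlonglongrightarrow> 0"
    by simp
  have "(\<lambda>k. overlap (\<mu> k i) (\<mu> k j)) \<longlonglongrightarrow> 0"
    by (rule tendsto_sandwich[OF _ _ tendsto_const upper]) (auto simp: overlap_nonneg bound)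
  then have "(\<lambda>k. 1 - overlap (\<mu> k i) (\<mu> k j)) \<longlonglongrightarrow> 1 - 0"
    by (intro tendsto_diff tendsto_const)
  then show ?thesis
    by (simp add: tv_dist_eq_1_minus_overlap)
qed

lemma success_prob_tendsto_1_if_tv_dist_tendsto_1:
  assumes tv: "\<And>i j. i \<noteq> j \<Longrightarrow> i \<in> set_pmf \<pi> \<Longrightarrow> j \<in> set_pmf \<pi> \<Longrightarrow>
                 (\<lambda>k. tv_dist (\<mu> k i) (\<mu> k j)) \<longlonglongrightarrow> 1"
  shows "\<exists>F. (\<lambda>k. success_prob \<pi> (\<mu> k) (F k)) \<longlonglongrightarrow> 1"
proof -
  have near_MAP: "\<forall>k. \<exists>f. \<forall>S. finite S \<longrightarrow> 1 - success_prob \<pi> (\<mu> k) f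
          \<le> 1 - measure_pmf.prob \<pi> S + overlap_sum (\<mu> k) S + inverse (real (Suc k))"
    by (intro allI ex_estimator_uniformly_near_MAP) simp
  then obtain F where F: "\<forall>k S. finite S \<longrightarrow> 1 - success_prob \<pi> (\<mu> k) (F k)
          \<le> 1 - measure_pmf.prob \<pi> S + overlap_sum (\<mu> k) S + inverse (real (Suc k))"
    using choice[OF near_MAP] by blast
  have "(\<lambda>k. success_prob \<pi> (\<mu> k) (F k)) \<longlonglongrightarrow> 1"
  proof (rule order_tendstoI)
    fix a :: real assume "a > 1"
    then show "eventually (\<lambda>k. success_prob \<pi> (\<mu> k) (F k) < a) sequentially"
      by (intro always_eventually allI) (meson success_prob_le_1 le_less_trans)
  next
    fix a :: real assume "a < 1"
    define e where "e = (1 - a) / 3"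
    have "e > 0" using \<open>a < 1\<close> by (simp add: e_def)
    then obtain S where S: "finite S" "S \<subseteq> set_pmf \<pi>" "measure_pmf.prob \<pi> S > 1 - e"
      using ex_finite_subset_set_pmf_prob_gt by meson
    have "(\<lambda>k. overlap (\<mu> k i) (\<mu> k j)) \<longlonglongrightarrow> 0" if "i \<in> S" "j \<in> S - {i}" for i j
    proof -
      have "(\<lambda>k. 1 - tv_dist (\<mu> k i) (\<mu> k j)) \<longlonglongrightarrow> 1 - 1"
        using that S(2) by (intro tendsto_diff tendsto_const tv) auto
      then show ?thesis
        by (simp add: tv_dist_eq_1_minus_overlap)
    qed
    then have "(\<lambda>k. overlap_sum (\<mu> k) S) \<longlonglongrightarrow> (\<Sum>i\<in>S. \<Sum>j\<in>S - {i}. 0)"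
      unfolding overlap_sum_def by (intro tendsto_sum) auto
    then have "(\<lambda>k. overlap_sum (\<mu> k) S) \<longlonglongrightarrow> 0"
      by simp
    then have "eventually (\<lambda>k. overlap_sum (\<mu> k) S < e) sequentially"
      using \<open>e > 0\<close> by (rule order_tendstoD)
    moreover have "eventually (\<lambda>k. inverse (real (Suc k)) < e) sequentially"
      using order_tendstoD(2)[OF LIMSEQ_inverse_real_of_nat \<open>e > 0\<close>] by simp
    ultimately show "eventually (\<lambda>k. a < success_prob \<pi> (\<mu> k) (F k)) sequentially"
    proof eventually_elim
      case (elim k)
      have "1 - success_prob \<pi> (\<mu> k) (F k)
          \<le> 1 - measure_pmf.prob \<pi> S + overlap_sum (\<mu> k) S + inverse (real (Suc k))"
        using F S(1) by blast
      then show ?case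
        using elim S(3) e_def by argo
    qed
  qed
  then show ?thesis by blast
qed

lemma liminf_ereal_eq_1_iff_tendsto:
  fixes f :: "nat \<Rightarrow> real"
  assumes "\<And>k. f k \<le> 1"
  shows "liminf (\<lambda>k. ereal (f k)) = 1 \<longleftrightarrow> f \<longlonglongrightarrow> 1"
proof
  assume liminf: "liminf (\<lambda>k. ereal (f k)) = 1"
  have "limsup (\<lambda>k. ereal (f k)) \<le> 1"
    by (rule Limsup_bounded) (simp add: assms)
  with liminf Liminf_le_Limsup[of sequentially "\<lambda>k. ereal (f k)"]
  have "(\<lambda>k. ereal (f k)) \<longlonglongrightarrow> ereal 1"
    by (subst tendsto_iff_Liminf_eq_Limsup) (simp_all add: one_ereal_def)
  then show "f \<longlonglongrightarrow> 1" by (simp only: lim_ereal)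
next
  assume "f \<longlonglongrightarrow> 1"
  then show "liminf (\<lambda>k. ereal (f k)) = 1"
    by (simp add: lim_imp_Liminf one_ereal_def)
qed

theorem mainTheorem6:
  fixes T :: "nat \<Rightarrow> 'v mtree"
    and P :: "real \<Rightarrow> 'a::countable \<Rightarrow> 'a pmf"
    and q :: "'a \<Rightarrow> 'a \<Rightarrow> real"
    and \<pi> :: "'a pmf"
  assumes trees: "\<And>k. k \<ge> 1 \<Longrightarrow> is_mtree (T k)"
    and nleaves: "\<And>k. k \<ge> 1 \<Longrightarrow> card (leaves (T k)) = k"
    and nested: "\<And>k. k \<ge> 2 \<Longrightarrow> restriction_of (T (k - 1)) (T k) (leaves (T (k - 1)))"
    and bounded_height: "\<exists>H. \<forall>k \<ge> 1. height (T k) \<le> H"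
    and trans: "transition_fun P"
    and Qmat: "stable_conservative_Q P q"
    and distinct_rows: "\<And>t i j. t \<ge> 0 \<Longrightarrow> i \<noteq> j \<Longrightarrow> P t i \<noteq> P t j"
  shows "(\<exists>F. consistent_estimators T P \<pi> F) \<longleftrightarrow>
         (\<forall>i j. i \<noteq> j \<and> min (pmf \<pi> i) (pmf \<pi> j) > 0 \<longrightarrow>
            liminf (\<lambda>k. ereal (tv_dist (leaf_law (T k) P i) (leaf_law (T k) P j))) = 1)"
proof -
  define \<mu> where "\<mu> k = leaf_law (T k) P" for k
  have consistent_iff:
    "consistent_estimators T P \<pi> F \<longleftrightarrow> (\<lambda>k. success_prob \<pi> (\<mu> k) (F k)) \<longlonglongrightarrow> 1" for F
    unfolding consistent_estimators_def prob_root_recovered_eq_success_prob \<mu>_def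
    by (rule liminf_ereal_eq_1_iff_tendsto) (rule success_prob_le_1)
  have tv_iff: "liminf (\<lambda>k. ereal (tv_dist (leaf_law (T k) P i) (leaf_law (T k) P j))) = 1
      \<longleftrightarrow> (\<lambda>k. tv_dist (\<mu> k i) (\<mu> k j)) \<longlonglongrightarrow> 1" for i j
    unfolding \<mu>_def by (rule liminf_ereal_eq_1_iff_tendsto) (rule tv_dist_le_1)
  show ?thesis
    unfolding consistent_iff tv_iff
  proof
    assume "\<exists>F. (\<lambda>k. success_prob \<pi> (\<mu> k) (F k)) \<longlonglongrightarrow> 1"
    then obtain F where F: "(\<lambda>k. success_prob \<pi> (\<mu> k) (F k)) \<longlonglongrightarrow> 1"
      by blast
    show "\<forall>i j. i \<noteq> j \<and> min (pmf \<pi> i) (pmf \<pi> j) > 0 \<longrightarrow>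
        (\<lambda>k. tv_dist (\<mu> k i) (\<mu> k j)) \<longlonglongrightarrow> 1"
      by (intro allI impI tv_dist_tendsto_1_if_success_prob_tendsto_1[OF F]) auto
  next
    assume tv: "\<forall>i j. i \<noteq> j \<and> min (pmf \<pi> i) (pmf \<pi> j) > 0 \<longrightarrow>
        (\<lambda>k. tv_dist (\<mu> k i) (\<mu> k j)) \<longlonglongrightarrow> 1"
    show "\<exists>F. (\<lambda>k. success_prob \<pi> (\<mu> k) (F k)) \<longlonglongrightarrow> 1"
    proof (rule success_prob_tendsto_1_if_tv_dist_tendsto_1)
      fix i j assume "i \<noteq> j" "i \<in> set_pmf \<pi>" "j \<in> set_pmf \<pi>"
      then show "(\<lambda>k. tv_dist (\<mu> k i) (\<mu> k j)) \<longlonglongrightarrow> 1"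
        by (intro tv[rule_format]) (simp add: pmf_positive)
    qed
  qed
qed

end
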